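(* Let $T$ be a commutative monad on a cartesian monoidal category $\mathbb{C}$ and $X$ an object. The family of Kleisli morphisms $(\mathsf{samp}_n:TX\rightsquigarrow X^{\otimes n})_{n\in\mathbb{N}}$ is jointly monic in $\mathsf{Kl}(T)$ if and only if the family of morphisms $\mu_{X^n}\circ T(\nabla_n)\circ T(\Delta_n):TTX\to T(X^n)$, $n\in\mathbb{N}$, is jointly monic in $\mathbb{C}$.
   Context: $T=(T,\eta,\mu)$ with monoidal structure $\nabla_{A,B}:TA\times TB\to T(A\times B)$; $\nabla_n:(TX)^n\to T(X^n)$ is the iterated monoidal structure (with $\nabla_0=\eta_1$, $\nabla_1=1$) and $\Delta_n:TX\to(TX)^n$ the $n$-fold diagonal. $\mathsf{Kl}(T)$: morphisms $f:A\rightsquigarrow B$ correspond to $f^\sharp:A\to TB$, composition $(g\circledcirc f)^\sharp=\mu\circ T(g^\sharp)\circ f^\sharp$, tensor $\otimes$ is $\times$ on objects with $(f\otimes g)^\sharp=\nabla\circ(f^\sharp\times g^\sharp)$. $\mathsf{force}_A:TA\rightsquigarrow A$ has $\mathsf{force}_A^\sharp=1_{TA}$; $\mathsf{copy}_n:TX\rightsquigarrow(TX)^{\otimes n}$ has $\mathsf{copy}_n^\sharp=\eta\circ\Delta_n$; $\mathsf{samp}_n=\mathsf{force}^{\otimes n}\circledcirc\mathsf{copy}_n$. A family of morphisms with common domain is jointly monic if any two morphisms into that domain which agree after composition with every member of the family are equal. *)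

theory Defs
  imports Main
begin

text \<open>A category with chosen finite products (terminal object and binary products),
  given by its object set, hom-sets, composition (cmp g f = g after f) and identities.\<close>

record ('o, 'm) ccat =
  c_ob   :: "'o set"
  c_hom  :: "'o \<Rightarrow> 'o \<Rightarrow> 'm set"
  c_cmp  :: "'m \<Rightarrow> 'm \<Rightarrow> 'm"
  c_id   :: "'o \<Rightarrow> 'm"
  c_one  :: "'o"
  c_trm  :: "'o \<Rightarrow> 'm"
  c_prd  :: "'o \<Rightarrow> 'o \<Rightarrow> 'o"
  c_pi1  :: "'o \<Rightarrow> 'o \<Rightarrow> 'm"
  c_pi2  :: "'o \<Rightarrow> 'o \<Rightarrow> 'm"
  c_pair :: "'m \<Rightarrow> 'm \<Rightarrow> 'm"

definition category :: "('o, 'm, 'x) ccat_scheme \<Rightarrow> bool" where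
  "category C \<longleftrightarrow>
     (\<forall>A B f. f \<in> c_hom C A B \<longrightarrow> A \<in> c_ob C \<and> B \<in> c_ob C)
   \<and> (\<forall>A B A' B'. c_hom C A B \<inter> c_hom C A' B' \<noteq> {} \<longrightarrow> A = A' \<and> B = B')
   \<and> (\<forall>A\<in>c_ob C. c_id C A \<in> c_hom C A A)
   \<and> (\<forall>A B D f g. f \<in> c_hom C A B \<longrightarrow> g \<in> c_hom C B D \<longrightarrow> c_cmp C g f \<in> c_hom C A D)
   \<and> (\<forall>A B f. f \<in> c_hom C A B \<longrightarrow> c_cmp C (c_id C B) f = f \<and> c_cmp C f (c_id C A) = f)
   \<and> (\<forall>A B D E f g h. f \<in> c_hom C A B \<longrightarrow> g \<in> c_hom C B D \<longrightarrow> h \<in> c_hom C D E \<longrightarrow>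
        c_cmp C h (c_cmp C g f) = c_cmp C (c_cmp C h g) f)"

definition cartesian_category :: "('o, 'm, 'x) ccat_scheme \<Rightarrow> bool" where
  "cartesian_category C \<longleftrightarrow> category C
   \<and> c_one C \<in> c_ob C
   \<and> (\<forall>A\<in>c_ob C. c_trm C A \<in> c_hom C A (c_one C)
                  \<and> (\<forall>f \<in> c_hom C A (c_one C). f = c_trm C A))
   \<and> (\<forall>A\<in>c_ob C. \<forall>B\<in>c_ob C.
        c_prd C A B \<in> c_ob C
      \<and> c_pi1 C A B \<in> c_hom C (c_prd C A B) A
      \<and> c_pi2 C A B \<in> c_hom C (c_prd C A B) B
      \<and> (\<forall>Z f g. f \<in> c_hom C Z A \<longrightarrow> g \<in> c_hom C Z B \<longrightarrow>
            c_pair C f g \<in> c_hom C Z (c_prd C A B)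
          \<and> c_cmp C (c_pi1 C A B) (c_pair C f g) = f
          \<and> c_cmp C (c_pi2 C A B) (c_pair C f g) = g)
      \<and> (\<forall>Z h. h \<in> c_hom C Z (c_prd C A B) \<longrightarrow>
            h = c_pair C (c_cmp C (c_pi1 C A B) h) (c_cmp C (c_pi2 C A B) h)))"

definition ctimes :: "('o, 'm, 'x) ccat_scheme \<Rightarrow> 'o \<Rightarrow> 'o \<Rightarrow> 'm \<Rightarrow> 'm \<Rightarrow> 'm" where
  "ctimes C A B f g = c_pair C (c_cmp C f (c_pi1 C A B)) (c_cmp C g (c_pi2 C A B))"

definition cassoc :: "('o, 'm, 'x) ccat_scheme \<Rightarrow> 'o \<Rightarrow> 'o \<Rightarrow> 'o \<Rightarrow> 'm" where
  "cassoc C A B D =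
     c_pair C (c_cmp C (c_pi1 C A B) (c_pi1 C (c_prd C A B) D))
              (c_pair C (c_cmp C (c_pi2 C A B) (c_pi1 C (c_prd C A B) D))
                        (c_pi2 C (c_prd C A B) D))"

definition cswap :: "('o, 'm, 'x) ccat_scheme \<Rightarrow> 'o \<Rightarrow> 'o \<Rightarrow> 'm" where
  "cswap C A B = c_pair C (c_pi2 C A B) (c_pi1 C A B)"

record ('o, 'm) cmonad =
  T_ob  :: "'o \<Rightarrow> 'o"
  T_ar  :: "'m \<Rightarrow> 'm"
  m_eta :: "'o \<Rightarrow> 'm"
  m_mu  :: "'o \<Rightarrow> 'm"
  m_nab :: "'o \<Rightarrow> 'o \<Rightarrow> 'm"

definition monad :: "('o, 'm, 'x) ccat_scheme \<Rightarrow> ('o, 'm, 'y) cmonad_scheme \<Rightarrow> bool" where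
  "monad C M \<longleftrightarrow>
     (\<forall>A\<in>c_ob C. T_ob M A \<in> c_ob C)
   \<and> (\<forall>A B f. f \<in> c_hom C A B \<longrightarrow> T_ar M f \<in> c_hom C (T_ob M A) (T_ob M B))
   \<and> (\<forall>A\<in>c_ob C. T_ar M (c_id C A) = c_id C (T_ob M A))
   \<and> (\<forall>A B D f g. f \<in> c_hom C A B \<longrightarrow> g \<in> c_hom C B D \<longrightarrow>
        T_ar M (c_cmp C g f) = c_cmp C (T_ar M g) (T_ar M f))
   \<and> (\<forall>A\<in>c_ob C. m_eta M A \<in> c_hom C A (T_ob M A)
                 \<and> m_mu M A \<in> c_hom C (T_ob M (T_ob M A)) (T_ob M A))
   \<and> (\<forall>A B f. f \<in> c_hom C A B \<longrightarrow>
        c_cmp C (T_ar M f) (m_eta M A) = c_cmp C (m_eta M B) f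
      \<and> c_cmp C (T_ar M f) (m_mu M A) = c_cmp C (m_mu M B) (T_ar M (T_ar M f)))
   \<and> (\<forall>A\<in>c_ob C.
        c_cmp C (m_mu M A) (m_eta M (T_ob M A)) = c_id C (T_ob M A)
      \<and> c_cmp C (m_mu M A) (T_ar M (m_eta M A)) = c_id C (T_ob M A)
      \<and> c_cmp C (m_mu M A) (T_ar M (m_mu M A)) = c_cmp C (m_mu M A) (m_mu M (T_ob M A)))"

definition commutative_monad :: "('o, 'm, 'x) ccat_scheme \<Rightarrow> ('o, 'm, 'y) cmonad_scheme \<Rightarrow> bool" where
  "commutative_monad C M \<longleftrightarrow> cartesian_category C \<and> monad C M
   \<and> (\<forall>A\<in>c_ob C. \<forall>B\<in>c_ob C.
        m_nab M A B \<in> c_hom C (c_prd C (T_ob M A) (T_ob M B)) (T_ob M (c_prd C A B)))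
   \<comment> \<open>naturality\<close>
   \<and> (\<forall>A B A' B' f g. f \<in> c_hom C A A' \<longrightarrow> g \<in> c_hom C B B' \<longrightarrow>
        c_cmp C (m_nab M A' B') (ctimes C (T_ob M A) (T_ob M B) (T_ar M f) (T_ar M g))
        = c_cmp C (T_ar M (ctimes C A B f g)) (m_nab M A B))
   \<comment> \<open>associativity\<close>
   \<and> (\<forall>A\<in>c_ob C. \<forall>B\<in>c_ob C. \<forall>D\<in>c_ob C.
        c_cmp C (T_ar M (cassoc C A B D))
          (c_cmp C (m_nab M (c_prd C A B) D)
             (ctimes C (c_prd C (T_ob M A) (T_ob M B)) (T_ob M D) (m_nab M A B) (c_id C (T_ob M D))))
        = c_cmp C (m_nab M A (c_prd C B D))
            (c_cmp C (ctimes C (T_ob M A) (c_prd C (T_ob M B) (T_ob M D)) (c_id C (T_ob M A)) (m_nab M B D))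
               (cassoc C (T_ob M A) (T_ob M B) (T_ob M D))))
   \<comment> \<open>unitality (unit map 1 \<rightarrow> T1 is eta)\<close>
   \<and> (\<forall>A\<in>c_ob C.
        c_cmp C (T_ar M (c_pi2 C (c_one C) A))
          (c_cmp C (m_nab M (c_one C) A)
             (ctimes C (c_one C) (T_ob M A) (m_eta M (c_one C)) (c_id C (T_ob M A))))
        = c_pi2 C (c_one C) (T_ob M A)
      \<and> c_cmp C (T_ar M (c_pi1 C A (c_one C)))
          (c_cmp C (m_nab M A (c_one C))
             (ctimes C (T_ob M A) (c_one C) (c_id C (T_ob M A)) (m_eta M (c_one C))))
        = c_pi1 C (T_ob M A) (c_one C))
   \<comment> \<open>symmetry\<close>
   \<and> (\<forall>A\<in>c_ob C. \<forall>B\<in>c_ob C.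
        c_cmp C (T_ar M (cswap C A B)) (m_nab M A B)
        = c_cmp C (m_nab M B A) (cswap C (T_ob M A) (T_ob M B)))
   \<comment> \<open>eta and mu are monoidal\<close>
   \<and> (\<forall>A\<in>c_ob C. \<forall>B\<in>c_ob C.
        c_cmp C (m_nab M A B) (ctimes C A B (m_eta M A) (m_eta M B)) = m_eta M (c_prd C A B)
      \<and> c_cmp C (m_nab M A B) (ctimes C (T_ob M (T_ob M A)) (T_ob M (T_ob M B)) (m_mu M A) (m_mu M B))
        = c_cmp C (m_mu M (c_prd C A B))
            (c_cmp C (T_ar M (m_nab M A B)) (m_nab M (T_ob M A) (T_ob M B))))"

primrec cpow :: "('o, 'm, 'x) ccat_scheme \<Rightarrow> 'o \<Rightarrow> nat \<Rightarrow> 'o" where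
  "cpow C X 0 = c_one C"
| "cpow C X (Suc n) = c_prd C (cpow C X n) X"

primrec cdiag :: "('o, 'm, 'x) ccat_scheme \<Rightarrow> 'o \<Rightarrow> nat \<Rightarrow> 'm" where
  "cdiag C X 0 = c_trm C X"
| "cdiag C X (Suc n) = c_pair C (cdiag C X n) (c_id C X)"

text \<open>Iterated monoidal structure (TX)^n \<rightarrow> T(X^n), with nabla_0 = eta_1, nabla_1 = 1
  (up to the canonical iso 1 \<times> X = X).\<close>
primrec nabn :: "('o, 'm, 'x) ccat_scheme \<Rightarrow> ('o, 'm, 'y) cmonad_scheme \<Rightarrow> 'o \<Rightarrow> nat \<Rightarrow> 'm" where
  "nabn C M X 0 = m_eta M (c_one C)"
| "nabn C M X (Suc n) =
     c_cmp C (m_nab M (cpow C X n) X)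
       (ctimes C (cpow C (T_ob M X) n) (T_ob M X) (nabn C M X n) (c_id C (T_ob M X)))"

text \<open>Kleisli morphisms f : A \<leadsto> B are represented by f# : A \<rightarrow> TB.
  kcomp B g f represents g \<circledcirc> f where g : _ \<leadsto> B.\<close>
definition kcomp :: "('o, 'm, 'x) ccat_scheme \<Rightarrow> ('o, 'm, 'y) cmonad_scheme \<Rightarrow> 'o \<Rightarrow> 'm \<Rightarrow> 'm \<Rightarrow> 'm" where
  "kcomp C M B g f = c_cmp C (m_mu M B) (c_cmp C (T_ar M g) f)"

definition ktensor :: "('o, 'm, 'x) ccat_scheme \<Rightarrow> ('o, 'm, 'y) cmonad_scheme
    \<Rightarrow> 'o \<Rightarrow> 'o \<Rightarrow> 'o \<Rightarrow> 'o \<Rightarrow> 'm \<Rightarrow> 'm \<Rightarrow> 'm" where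
  "ktensor C M A B A' B' f g = c_cmp C (m_nab M A' B') (ctimes C A B f g)"

definition kforce :: "('o, 'm, 'x) ccat_scheme \<Rightarrow> ('o, 'm, 'y) cmonad_scheme \<Rightarrow> 'o \<Rightarrow> 'm" where
  "kforce C M A = c_id C (T_ob M A)"

text \<open>force_X^{\<otimes>n} : (TX)^{\<otimes>n} \<leadsto> X^{\<otimes>n}; the 0-fold tensor is the Kleisli identity on I = 1.\<close>
primrec kforce_pow :: "('o, 'm, 'x) ccat_scheme \<Rightarrow> ('o, 'm, 'y) cmonad_scheme \<Rightarrow> 'o \<Rightarrow> nat \<Rightarrow> 'm" where
  "kforce_pow C M X 0 = m_eta M (c_one C)"
| "kforce_pow C M X (Suc n) =
     ktensor C M (cpow C (T_ob M X) n) (T_ob M X) (cpow C X n) X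
       (kforce_pow C M X n) (kforce C M X)"

definition kcopy :: "('o, 'm, 'x) ccat_scheme \<Rightarrow> ('o, 'm, 'y) cmonad_scheme \<Rightarrow> 'o \<Rightarrow> nat \<Rightarrow> 'm" where
  "kcopy C M X n = c_cmp C (m_eta M (cpow C (T_ob M X) n)) (cdiag C (T_ob M X) n)"

definition samp :: "('o, 'm, 'x) ccat_scheme \<Rightarrow> ('o, 'm, 'y) cmonad_scheme \<Rightarrow> 'o \<Rightarrow> nat \<Rightarrow> 'm" where
  "samp C M X n = kcomp C M (cpow C X n) (kforce_pow C M X n) (kcopy C M X n)"

definition jointly_monic :: "('o, 'm, 'x) ccat_scheme \<Rightarrow> 'o \<Rightarrow> (nat \<Rightarrow> 'm) \<Rightarrow> bool" where
  "jointly_monic C A fs \<longleftrightarrow>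
     (\<forall>Y\<in>c_ob C. \<forall>g\<in>c_hom C Y A. \<forall>h\<in>c_hom C Y A.
        (\<forall>n. c_cmp C (fs n) g = c_cmp C (fs n) h) \<longrightarrow> g = h)"

definition kl_jointly_monic :: "('o, 'm, 'x) ccat_scheme \<Rightarrow> ('o, 'm, 'y) cmonad_scheme
    \<Rightarrow> 'o \<Rightarrow> (nat \<Rightarrow> 'o) \<Rightarrow> (nat \<Rightarrow> 'm) \<Rightarrow> bool" where
  "kl_jointly_monic C M A cods fs \<longleftrightarrow>
     (\<forall>Y\<in>c_ob C. \<forall>g\<in>c_hom C Y (T_ob M A). \<forall>h\<in>c_hom C Y (T_ob M A).
        (\<forall>n. kcomp C M (cods n) (fs n) g = kcomp C M (cods n) (fs n) h) \<longrightarrow> g = h)"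

end

theory Submission
  imports Defs
begin

text \<open>Since copy is pure, samp_n is the ordinary composite of its two factors, and the
  n-fold Kleisli tensor of force is the iterated monoidal structure itself; hence
  samp_n is represented by \<nabla>_n \<circ> \<Delta>_n. In any Kleisli category, postcomposing
  a Kleisli morphism f : A \<leadsto> B with g : Y \<rightarrow> TA is ordinary postcomposition
  with \<mu>_B \<circ> Tf, so a family f_n is jointly monic in Kl(T) exactly when the family
  \<mu> \<circ> Tf_n is jointly monic in the base category.\<close>

lemma kforce_pow_eq_nabn: "kforce_pow C M X n = nabn C M X n"
  by (induction n) (simp_all add: ktensor_def kforce_def)

locale cat =
  fixes C :: "('o, 'm, 'x) ccat_scheme"
  assumes cat: "category C"
begin

lemma hom_obs: "f \<in> c_hom C A B \<Longrightarrow> A \<in> c_ob C \<and> B \<in> c_ob C"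
  using cat by (auto simp: category_def)

lemma id_hom: "A \<in> c_ob C \<Longrightarrow> c_id C A \<in> c_hom C A A"
  using cat by (auto simp: category_def)

lemma cmp_hom: "f \<in> c_hom C A B \<Longrightarrow> g \<in> c_hom C B D \<Longrightarrow> c_cmp C g f \<in> c_hom C A D"
  using cat unfolding category_def by blast

lemma cmp_id_left: "f \<in> c_hom C A B \<Longrightarrow> c_cmp C (c_id C B) f = f"
  using cat unfolding category_def by blast

lemma cmp_assoc:
  "f \<in> c_hom C A B \<Longrightarrow> g \<in> c_hom C B D \<Longrightarrow> h \<in> c_hom C D E \<Longrightarrow>
     c_cmp C h (c_cmp C g f) = c_cmp C (c_cmp C h g) f"
  using cat unfolding category_def by blast

end

locale cartesian_cat =
  fixes C :: "('o, 'm, 'x) ccat_scheme"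
  assumes cartesian: "cartesian_category C"
begin

sublocale cat
  using cartesian by unfold_locales (simp add: cartesian_category_def)

lemma one_ob: "c_one C \<in> c_ob C"
  using cartesian by (simp add: cartesian_category_def)

lemma trm_hom: "A \<in> c_ob C \<Longrightarrow> c_trm C A \<in> c_hom C A (c_one C)"
  using cartesian by (simp add: cartesian_category_def)

lemma prd_ob: "A \<in> c_ob C \<Longrightarrow> B \<in> c_ob C \<Longrightarrow> c_prd C A B \<in> c_ob C"
  using cartesian by (simp add: cartesian_category_def)

lemma pi1_hom: "A \<in> c_ob C \<Longrightarrow> B \<in> c_ob C \<Longrightarrow> c_pi1 C A B \<in> c_hom C (c_prd C A B) A"
  using cartesian by (simp add: cartesian_category_def)

lemma pi2_hom: "A \<in> c_ob C \<Longrightarrow> B \<in> c_ob C \<Longrightarrow> c_pi2 C A B \<in> c_hom C (c_prd C A B) B"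
  using cartesian by (simp add: cartesian_category_def)

lemma pair_hom:
  "A \<in> c_ob C \<Longrightarrow> B \<in> c_ob C \<Longrightarrow> f \<in> c_hom C Z A \<Longrightarrow> g \<in> c_hom C Z B \<Longrightarrow>
     c_pair C f g \<in> c_hom C Z (c_prd C A B)"
  using cartesian unfolding cartesian_category_def by blast

lemma ctimes_hom:
  assumes "f \<in> c_hom C A A'" and "g \<in> c_hom C B B'"
  shows "ctimes C A B f g \<in> c_hom C (c_prd C A B) (c_prd C A' B')"
  using assms hom_obs[OF assms(1)] hom_obs[OF assms(2)] unfolding ctimes_def
  by (intro pair_hom cmp_hom[OF pi1_hom] cmp_hom[OF pi2_hom]) auto

lemma cpow_ob: "X \<in> c_ob C \<Longrightarrow> cpow C X n \<in> c_ob C"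
  by (induction n) (simp_all add: one_ob prd_ob)

lemma cdiag_hom: "X \<in> c_ob C \<Longrightarrow> cdiag C X n \<in> c_hom C X (cpow C X n)"
  by (induction n) (simp_all add: trm_hom pair_hom cpow_ob id_hom)

end

locale cat_monad = cat C for C :: "('o, 'm, 'x) ccat_scheme" +
  fixes M :: "('o, 'm, 'y) cmonad_scheme"
  assumes monad: "monad C M"
begin

lemma T_ob: "A \<in> c_ob C \<Longrightarrow> T_ob M A \<in> c_ob C"
  using monad by (simp add: monad_def)

lemma T_hom: "f \<in> c_hom C A B \<Longrightarrow> T_ar M f \<in> c_hom C (T_ob M A) (T_ob M B)"
  using monad unfolding monad_def by blast

lemma T_cmp:
  "f \<in> c_hom C A B \<Longrightarrow> g \<in> c_hom C B D \<Longrightarrow> T_ar M (c_cmp C g f) = c_cmp C (T_ar M g) (T_ar M f)"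
  using monad unfolding monad_def by blast

lemma eta_hom: "A \<in> c_ob C \<Longrightarrow> m_eta M A \<in> c_hom C A (T_ob M A)"
  using monad unfolding monad_def by blast

lemma mu_hom: "A \<in> c_ob C \<Longrightarrow> m_mu M A \<in> c_hom C (T_ob M (T_ob M A)) (T_ob M A)"
  using monad unfolding monad_def by blast

lemma eta_natural: "f \<in> c_hom C A B \<Longrightarrow> c_cmp C (T_ar M f) (m_eta M A) = c_cmp C (m_eta M B) f"
  using monad unfolding monad_def by blast

lemma mu_eta: "A \<in> c_ob C \<Longrightarrow> c_cmp C (m_mu M A) (m_eta M (T_ob M A)) = c_id C (T_ob M A)"
  using monad unfolding monad_def by blast

lemma kcomp_pure:
  assumes B: "B \<in> c_ob C" and f: "f \<in> c_hom C A (T_ob M B)" and d: "d \<in> c_hom C Z A"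
  shows "kcomp C M B f (c_cmp C (m_eta M A) d) = c_cmp C f d"
proof -
  have eta: "m_eta M A \<in> c_hom C A (T_ob M A)"
    using hom_obs[OF d] by (simp add: eta_hom)
  have eta': "m_eta M (T_ob M B) \<in> c_hom C (T_ob M B) (T_ob M (T_ob M B))"
    using B by (simp add: eta_hom T_ob)
  have mu: "m_mu M B \<in> c_hom C (T_ob M (T_ob M B)) (T_ob M B)"
    using B by (rule mu_hom)
  have "kcomp C M B f (c_cmp C (m_eta M A) d)
      = c_cmp C (m_mu M B) (c_cmp C (c_cmp C (T_ar M f) (m_eta M A)) d)"
    unfolding kcomp_def using cmp_assoc[OF d eta T_hom[OF f]] by simp
  also have "\<dots> = c_cmp C (m_mu M B) (c_cmp C (m_eta M (T_ob M B)) (c_cmp C f d))"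
    using eta_natural[OF f] cmp_assoc[OF d f eta'] by simp
  also have "\<dots> = c_cmp C (c_cmp C (m_mu M B) (m_eta M (T_ob M B))) (c_cmp C f d)"
    using cmp_assoc[OF cmp_hom[OF d f] eta' mu] .
  also have "\<dots> = c_cmp C f d"
    using mu_eta[OF B] cmp_id_left[OF cmp_hom[OF d f]] by simp
  finally show ?thesis .
qed

lemma kcomp_eq_cmp:
  assumes "B \<in> c_ob C" and "f \<in> c_hom C A (T_ob M B)" and "g \<in> c_hom C Y (T_ob M A)"
  shows "kcomp C M B f g = c_cmp C (c_cmp C (m_mu M B) (T_ar M f)) g"
  unfolding kcomp_def using cmp_assoc[OF assms(3) T_hom[OF assms(2)] mu_hom[OF assms(1)]] .

lemma kl_jointly_monic_iff_jointly_monic: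
  assumes "\<And>n. cods n \<in> c_ob C" and "\<And>n. fs n \<in> c_hom C A (T_ob M (cods n))"
  shows "kl_jointly_monic C M A cods fs
     \<longleftrightarrow> jointly_monic C (T_ob M A) (\<lambda>n. c_cmp C (m_mu M (cods n)) (T_ar M (fs n)))"
proof -
  have "kcomp C M (cods n) (fs n) g = c_cmp C (c_cmp C (m_mu M (cods n)) (T_ar M (fs n))) g"
    if "g \<in> c_hom C Y (T_ob M A)" for Y g n
    using assms that by (rule kcomp_eq_cmp)
  then show ?thesis
    unfolding kl_jointly_monic_def jointly_monic_def by (simp cong: ball_cong)
qed

end

locale comm_monad =
  fixes C :: "('o, 'm, 'x) ccat_scheme" and M :: "('o, 'm, 'y) cmonad_scheme"
  assumes commutative: "commutative_monad C M"
begin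

sublocale cartesian_cat
  using commutative by unfold_locales (simp add: commutative_monad_def)

sublocale cat_monad
  using commutative by unfold_locales (simp add: commutative_monad_def)

lemma nab_hom:
  "A \<in> c_ob C \<Longrightarrow> B \<in> c_ob C \<Longrightarrow>
     m_nab M A B \<in> c_hom C (c_prd C (T_ob M A) (T_ob M B)) (T_ob M (c_prd C A B))"
  using commutative unfolding commutative_monad_def by blast

lemma nabn_hom:
  assumes X: "X \<in> c_ob C"
  shows "nabn C M X n \<in> c_hom C (cpow C (T_ob M X) n) (T_ob M (cpow C X n))"
proof (induction n)
  case 0
  then show ?case by (simp add: eta_hom one_ob)
next
  case (Suc n)
  have "ctimes C (cpow C (T_ob M X) n) (T_ob M X) (nabn C M X n) (c_id C (T_ob M X))
     \<in> c_hom C (c_prd C (cpow C (T_ob M X) n) (T_ob M X)) (c_prd C (T_ob M (cpow C X n)) (T_ob M X))"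
    using Suc X by (intro ctimes_hom) (auto simp: T_ob id_hom)
  then show ?case
    using X by (simp add: cmp_hom nab_hom cpow_ob)
qed

lemma samp_eq_nabn_cdiag:
  assumes "X \<in> c_ob C"
  shows "samp C M X n = c_cmp C (nabn C M X n) (cdiag C (T_ob M X) n)"
  unfolding samp_def kcopy_def kforce_pow_eq_nabn
  using assms by (intro kcomp_pure[OF _ _ cdiag_hom]) (simp_all add: cpow_ob nabn_hom T_ob)

end

theorem proposition6p3:
  fixes C :: "('o, 'm) ccat" and M :: "('o, 'm) cmonad" and X :: 'o
  assumes "commutative_monad C M" and "X \<in> c_ob C"
  shows "kl_jointly_monic C M (T_ob M X) (\<lambda>n. cpow C X n) (\<lambda>n. samp C M X n)
     \<longleftrightarrow> jointly_monic C (T_ob M (T_ob M X))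
           (\<lambda>n. c_cmp C (m_mu M (cpow C X n))
                  (c_cmp C (T_ar M (nabn C M X n)) (T_ar M (cdiag C (T_ob M X) n))))"
proof -
  interpret comm_monad C M
    using assms(1) by unfold_locales
  have diag: "cdiag C (T_ob M X) n \<in> c_hom C (T_ob M X) (cpow C (T_ob M X) n)" for n
    using assms(2) by (simp add: cdiag_hom T_ob)
  have samp: "samp C M X n = c_cmp C (nabn C M X n) (cdiag C (T_ob M X) n)" for n
    using assms(2) by (rule samp_eq_nabn_cdiag)
  have "samp C M X n \<in> c_hom C (T_ob M X) (T_ob M (cpow C X n))" for n
    unfolding samp using cmp_hom[OF diag nabn_hom[OF assms(2)]] .
  then have "kl_jointly_monic C M (T_ob M X) (\<lambda>n. cpow C X n) (\<lambda>n. samp C M X n)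
     \<longleftrightarrow> jointly_monic C (T_ob M (T_ob M X))
           (\<lambda>n. c_cmp C (m_mu M (cpow C X n)) (T_ar M (samp C M X n)))"
    using assms(2) by (intro kl_jointly_monic_iff_jointly_monic) (simp_all add: cpow_ob)
  also have "(\<lambda>n. T_ar M (samp C M X n))
      = (\<lambda>n. c_cmp C (T_ar M (nabn C M X n)) (T_ar M (cdiag C (T_ob M X) n)))"
    unfolding samp using T_cmp[OF diag nabn_hom[OF assms(2)]] by simp
  finally show ?thesis .
qed

end
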